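(* Let $0\le r<1$. In the RRH with redirection parameter $r$, for every $N\ge 2$, $$\mathbb{E}[\mathcal{N}_1(N)]=\frac{N}{2-r}-\frac{1}{(2-r)\,\Gamma(r)}\,\frac{\Gamma(N-1+r)}{\Gamma(N)}$$ (for $r=0$ the second term is interpreted as $0$, giving $N/2$).
   Context: The RRH with redirection parameter $r\in[0,1)$ is the following random hypergraph process. At size $N=1$ it has vertex set $\{v_1\}$ and edge set $\{\{v_1\}\}$. Given the hypergraph of size $N$ (vertices $v_1,\dots,v_N$, $N$ edges), choose an existing edge $e$ uniformly at random and add a new vertex $v_{N+1}$ and one new edge, as follows. If $e=\{v_1\}$, the new edge is $\{v_1,v_{N+1}\}$. Otherwise write $e=\{v_{i_1},\dots,v_{i_n}\}$ with $1=i_1<\dots<i_n$, $n\ge2$; independently, with probability $1-r$ the new edge is $e\cup\{v_{N+1}\}$ and with probability $r$ it is $\{v_{i_1},\dots,v_{i_{n-1}},v_{N+1}\}$. The degree of a vertex is the number of edges containing it; $\mathcal{N}_k(N)$ is the number of vertices of degree $k$ at size $N$. *)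

theory Defs
  imports "HOL-Analysis.Analysis" "HOL-Probability.Probability"
begin

text \<open>A hypergraph of size N has vertices 1..N (vertex v_i is the natural number i)
and is represented by its (finite) set of edges; every edge is a set of vertices.\<close>

text \<open>One growth step: the current hypergraph has N vertices and edge set E;
a new vertex N+1 and one new edge are added.  bernoulli_pmf r is True with
probability r (redirection: the largest vertex of e is dropped).\<close>
definition rrh_step :: "real \<Rightarrow> nat \<Rightarrow> nat set set \<Rightarrow> nat set set pmf" where
  "rrh_step r N E =
     do { e \<leftarrow> pmf_of_set E;
          if e = {1} then return_pmf (insert {1, N + 1} E)
          else do { b \<leftarrow> bernoulli_pmf r;
                    return_pmf (insert (if b then insert (N + 1) (e - {Max e})
                                        else insert (N + 1) e) E) } }"

text \<open>rrh_aux r n is the random hypergraph of size n+1.\<close>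
fun rrh_aux :: "real \<Rightarrow> nat \<Rightarrow> nat set set pmf" where
  "rrh_aux r 0 = return_pmf {{1}}"
| "rrh_aux r (Suc n) = bind_pmf (rrh_aux r n) (rrh_step r (Suc n))"

definition RRH :: "real \<Rightarrow> nat \<Rightarrow> nat set set pmf" where
  "RRH r N = rrh_aux r (N - 1)"

definition degree :: "nat set set \<Rightarrow> nat \<Rightarrow> nat" where
  "degree E v = card {e \<in> E. v \<in> e}"

definition Ncount :: "nat \<Rightarrow> nat \<Rightarrow> nat set set \<Rightarrow> nat" where
  "Ncount N k E = card {v \<in> {1..N}. degree E v = k}"

end

theory Submission
  imports Defs
begin

text \<open>
Every vertex is the largest element of exactly one edge, namely the edge created together with it,
and vertex 1 lies in every edge.  So a degree-one vertex lies only in its own edge.  The new edge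
is contained in \<open>e \<union> {N + 1}\<close> for the chosen edge \<open>e\<close>; hence the only vertex that can lose
degree one is \<open>Max e\<close>, and it does exactly when it has degree one and the edge is not redirected.
As \<open>Max\<close> is a bijection from edges to vertices, averaging over \<open>e\<close> gives
\<open>\<bbbE>[N\<^sub>1(N + 1)] = 1 + (1 - (1 - r) / N) \<bbbE>[N\<^sub>1(N)]\<close>.  By \<open>\<Gamma>(x + 1) = x \<Gamma>(x)\<close> the closed form
satisfies the same recurrence, and both equal 1 at \<open>N = 2\<close>.
\<close>

lemma expectation_bind_pmf:
  fixes f :: "'b \<Rightarrow> real"
  assumes "\<And>y. \<bar>f y\<bar> \<le> B"
  shows "measure_pmf.expectation (M \<bind> K) f
       = measure_pmf.expectation M (\<lambda>x. measure_pmf.expectation (K x) f)"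
  unfolding measure_pmf_bind
  by (rule integral_bind[where K="count_space UNIV" and B=B and B'=1])
     (simp_all add: assms measure_pmf_in_subprob_algebra)

lemma Gamma_quotient_plus1:
  fixes x y :: real
  assumes "0 < x" "0 < y"
  shows "Gamma (x + 1) / Gamma (y + 1) = x / y * (Gamma x / Gamma y)"
proof -
  have "x \<notin> \<int>\<^sub>\<le>\<^sub>0" "y \<notin> \<int>\<^sub>\<le>\<^sub>0"
    using assms by (auto dest: nonpos_Ints_nonpos)
  then show ?thesis
    by (simp add: Gamma_plus1)
qed

text \<open>\<open>Max\<close> sends each edge to the vertex that was added together with it.\<close>

definition rrh_invariant :: "nat \<Rightarrow> nat set set \<Rightarrow> bool" where
  "rrh_invariant N E \<longleftrightarrow> (\<forall>e\<in>E. 1 \<in> e \<and> e \<subseteq> {1..N}) \<and> bij_betw Max E {1..N}"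

definition rrh_new_edge :: "nat \<Rightarrow> nat set \<Rightarrow> bool \<Rightarrow> nat set" where
  "rrh_new_edge N e b = (if b \<and> e \<noteq> {1} then insert (N + 1) (e - {Max e}) else insert (N + 1) e)"

lemma rrh_step_eq_bind_bernoulli:
  "rrh_step r N E =
     pmf_of_set E \<bind> (\<lambda>e. map_pmf (\<lambda>b. insert (rrh_new_edge N e b) E) (bernoulli_pmf r))"
  unfolding rrh_step_def
proof (intro bind_pmf_cong refl)
  fix e :: "nat set"
  show "(if e = {1} then return_pmf (insert {1, N + 1} E)
         else bernoulli_pmf r \<bind> (\<lambda>b. return_pmf (insert (if b then insert (N + 1) (e - {Max e})
                                                           else insert (N + 1) e) E)))
      = map_pmf (\<lambda>b. insert (rrh_new_edge N e b) E) (bernoulli_pmf r)"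
  proof (cases "e = {1}")
    case True
    then have "rrh_new_edge N e b = {1, N + 1}" for b
      by (auto simp: rrh_new_edge_def)
    then show ?thesis
      using True by simp
  next
    case False
    then show ?thesis
      by (simp add: rrh_new_edge_def map_pmf_def)
  qed
qed

lemma set_pmf_rrh_step:
  assumes "finite E" "E \<noteq> {}" "E' \<in> set_pmf (rrh_step r N E)"
  obtains e b where "e \<in> E" "E' = insert (rrh_new_edge N e b) E"
  using assms by (auto simp: rrh_step_eq_bind_bernoulli)

lemma rrh_invariant_finite: "rrh_invariant N E \<Longrightarrow> finite E"
  unfolding rrh_invariant_def using bij_betw_finite by blast

lemma rrh_invariant_card: "rrh_invariant N E \<Longrightarrow> card E = N"
  unfolding rrh_invariant_def by (auto dest: bij_betw_same_card)

lemma rrh_invariant_edge: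
  "rrh_invariant N E \<Longrightarrow> e \<in> E \<Longrightarrow> 1 \<in> e \<and> e \<subseteq> {1..N}"
  unfolding rrh_invariant_def by blast

lemma rrh_invariant_insert:
  assumes inv: "rrh_invariant N E" and "1 \<in> e'" "Suc N \<in> e'" "e' \<subseteq> {1..Suc N}"
  shows "rrh_invariant (Suc N) (insert e' E)"
proof -
  have "Max e' = Suc N"
    using assms by (intro Max_eqI) (auto intro: finite_subset)
  moreover have "e' \<notin> E"
    using rrh_invariant_edge[OF inv, of e'] \<open>Suc N \<in> e'\<close> by fastforce
  ultimately have "bij_betw Max (insert e' E) (insert (Suc N) {1..N})"
    using inv unfolding rrh_invariant_def bij_betw_def by auto
  moreover have "insert (Suc N) {1..N} = {1..Suc N}"
    by auto
  ultimately show ?thesis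
    using assms unfolding rrh_invariant_def by auto
qed

lemma rrh_new_edge_bounds:
  assumes "1 \<in> e" "e \<subseteq> {1..N}"
  shows "1 \<in> rrh_new_edge N e b" "Suc N \<in> rrh_new_edge N e b"
    "rrh_new_edge N e b \<subseteq> {1..Suc N}"
proof -
  have "1 \<in> e - {Max e}" if "e \<noteq> {1}"
  proof -
    obtain x where "x \<in> e" "x \<noteq> 1"
      using assms \<open>e \<noteq> {1}\<close> by blast
    moreover have "finite e"
      using assms(2) finite_subset by blast
    ultimately have "1 < x" "x \<le> Max e"
      using assms by auto
    then show ?thesis
      using assms(1) by auto
  qed
  then show "1 \<in> rrh_new_edge N e b"
    using assms by (simp add: rrh_new_edge_def)
  show "Suc N \<in> rrh_new_edge N e b" "rrh_new_edge N e b \<subseteq> {1..Suc N}"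
    using assms by (auto simp: rrh_new_edge_def)
qed

lemma rrh_invariant_rrh_step:
  assumes "rrh_invariant N E" "1 \<le> N" "E' \<in> set_pmf (rrh_step r N E)"
  shows "rrh_invariant (Suc N) E'"
proof -
  have "finite E" "E \<noteq> {}"
    using rrh_invariant_finite[OF assms(1)] rrh_invariant_card[OF assms(1)] assms(2) by auto
  then obtain e b where "e \<in> E" "E' = insert (rrh_new_edge N e b) E"
    using assms(3) by (rule set_pmf_rrh_step)
  then show ?thesis
    using assms(1) rrh_invariant_edge rrh_new_edge_bounds by (metis rrh_invariant_insert)
qed

lemma RRH_Suc: "1 \<le> N \<Longrightarrow> RRH r (Suc N) = RRH r N \<bind> rrh_step r N"
  by (cases N) (simp_all add: RRH_def)

lemma rrh_invariant_RRH:
  assumes "1 \<le> N" "E \<in> set_pmf (RRH r N)"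
  shows "rrh_invariant N E"
  using assms
proof (induction N arbitrary: E rule: dec_induct)
  case base
  then show ?case
    by (simp add: RRH_def rrh_invariant_def bij_betw_def)
next
  case (step n)
  then obtain E0 where "E0 \<in> set_pmf (RRH r n)" "E \<in> set_pmf (rrh_step r n E0)"
    by (auto simp: RRH_Suc)
  then show ?case
    using step.IH step.hyps(1) by (blast intro: rrh_invariant_rrh_step)
qed

lemma degree_insert:
  assumes "finite E" "e' \<notin> E"
  shows "degree (insert e' E) v = degree E v + (if v \<in> e' then 1 else 0)"
proof -
  have "{e \<in> insert e' E. v \<in> e} =
        (if v \<in> e' then insert e' {e \<in> E. v \<in> e} else {e \<in> E. v \<in> e})"
    by auto
  then show ?thesis
    using assms by (simp add: degree_def)
qed

lemma degree_root:
  assumes "rrh_invariant N E"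
  shows "degree E 1 = N"
proof -
  have "{e \<in> E. 1 \<in> e} = E"
    using rrh_invariant_edge[OF assms] by blast
  then show ?thesis
    using rrh_invariant_card[OF assms] by (simp add: degree_def)
qed

lemma rrh_invariant_vertex_edge:
  assumes "rrh_invariant N E" "v \<in> {1..N}"
  obtains e where "e \<in> E" "Max e = v" "v \<in> e"
proof -
  have "v \<in> Max ` E"
    using assms unfolding rrh_invariant_def bij_betw_def by simp
  then obtain e where "e \<in> E" "Max e = v"
    by blast
  moreover have "finite e" "e \<noteq> {}"
    using rrh_invariant_edge[OF assms(1) \<open>e \<in> E\<close>] by (auto intro: finite_subset)
  ultimately show ?thesis
    using that Max_in by blast
qed

lemma degree_pos:
  assumes inv: "rrh_invariant N E" and "v \<in> {1..N}"
  shows "0 < degree E v"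
proof -
  obtain e where "e \<in> E" "v \<in> e"
    using rrh_invariant_vertex_edge[OF assms] by blast
  then show ?thesis
    using rrh_invariant_finite[OF inv] by (auto simp: degree_def card_gt_0_iff)
qed

lemma degree_one_imp_Max:
  assumes inv: "rrh_invariant N E" and "e \<in> E" "v \<in> e" "degree E v = 1"
  shows "v = Max e"
proof (rule ccontr)
  assume "v \<noteq> Max e"
  have "v \<in> {1..N}"
    using rrh_invariant_edge[OF inv \<open>e \<in> E\<close>] \<open>v \<in> e\<close> by auto
  then obtain e2 where "e2 \<in> E" "Max e2 = v" "v \<in> e2"
    by (rule rrh_invariant_vertex_edge[OF inv])
  then have "{e, e2} \<subseteq> {e \<in> E. v \<in> e}" "e \<noteq> e2"
    using \<open>e \<in> E\<close> \<open>v \<in> e\<close> \<open>v \<noteq> Max e\<close> by auto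
  then have "card {e, e2} \<le> degree E v"
    unfolding degree_def using rrh_invariant_finite[OF inv] by (intro card_mono) auto
  then have "2 \<le> degree E v"
    using \<open>e \<noteq> e2\<close> by simp
  then show False
    using \<open>degree E v = 1\<close> by simp
qed

lemma Ncount_le: "Ncount N k E \<le> N"
proof -
  have "card {v \<in> {1..N}. degree E v = k} \<le> card {1..N}"
    by (rule card_mono) auto
  then show ?thesis
    by (simp add: Ncount_def)
qed

lemma Ncount_insert:
  assumes inv: "rrh_invariant N E" and "Suc N \<in> e'" "e' \<subseteq> {1..Suc N}"
  shows "Ncount (Suc N) 1 (insert e' E) = Suc (card {v \<in> {1..N}. degree E v = 1 \<and> v \<notin> e'})"
proof -
  have "e' \<notin> E"
    using rrh_invariant_edge[OF inv, of e'] \<open>Suc N \<in> e'\<close> by fastforce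
  then have deg: "degree (insert e' E) v = degree E v + (if v \<in> e' then 1 else 0)" for v
    using degree_insert rrh_invariant_finite[OF inv] by blast
  have "{e \<in> E. Suc N \<in> e} = {}"
    using rrh_invariant_edge[OF inv] by fastforce
  then have "degree E (Suc N) = 0"
    unfolding degree_def by (simp only: card.empty)
  have "degree (insert e' E) v = 1 \<longleftrightarrow> v = Suc N \<or> degree E v = 1 \<and> v \<notin> e'"
    if "v \<in> {1..Suc N}" for v
  proof (cases "v = Suc N")
    case True
    then show ?thesis
      using deg \<open>degree E (Suc N) = 0\<close> \<open>Suc N \<in> e'\<close> by simp
  next
    case False
    then have "0 < degree E v"
      using that by (intro degree_pos[OF inv]) auto
    then show ?thesis
      using deg[of v] False by auto
  qed
  then have "{v \<in> {1..Suc N}. degree (insert e' E) v = 1}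
           = insert (Suc N) {v \<in> {1..N}. degree E v = 1 \<and> v \<notin> e'}"
    by (auto simp: atLeastAtMostSuc_conv)
  then show ?thesis
    by (simp add: Ncount_def)
qed

lemma Ncount_insert_rrh_new_edge:
  assumes inv: "rrh_invariant N E" and "2 \<le> N" "e \<in> E"
  shows "real (Ncount (Suc N) 1 (insert (rrh_new_edge N e b) E))
       = 1 + real (Ncount N 1 E) - (if \<not> b \<and> degree E (Max e) = 1 then 1 else 0)"
proof -
  define D where "D = {v \<in> {1..N}. degree E v = 1}"
  have e: "1 \<in> e" "e \<subseteq> {1..N}"
    using rrh_invariant_edge[OF inv \<open>e \<in> E\<close>] by auto
  then have "Max e \<in> e"
    using finite_subset by (intro Max_in) auto
  \<comment> \<open>For \<open>e = {1}\<close> the coin is ignored, but \<open>Max e = 1\<close> has degree \<open>N \<ge> 2\<close> and is not in \<open>D\<close>.\<close>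
  have "{v \<in> {1..N}. degree E v = 1 \<and> v \<notin> rrh_new_edge N e b} = (if b then D else D - {Max e})"
    using degree_one_imp_Max[OF inv \<open>e \<in> E\<close>] degree_root[OF inv] \<open>2 \<le> N\<close> \<open>Max e \<in> e\<close>
    by (auto simp: D_def rrh_new_edge_def)
  then have "real (Ncount (Suc N) 1 (insert (rrh_new_edge N e b) E))
           = 1 + real (card (if b then D else D - {Max e}))"
    using Ncount_insert[OF inv] rrh_new_edge_bounds[OF e] by simp
  moreover have "real (card (D - {Max e})) = real (card D) - (if degree E (Max e) = 1 then 1 else 0)"
  proof (cases "Max e \<in> D")
    case True
    then show ?thesis
      using card_Suc_Diff1[OF _ True] by (simp add: D_def)
  qed (use \<open>Max e \<in> e\<close> e in \<open>auto simp: D_def\<close>)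
  moreover have "Ncount N 1 E = card D"
    by (simp add: Ncount_def D_def)
  ultimately show ?thesis
    by (cases b) simp_all
qed

lemma expectation_Ncount_rrh_step:
  assumes inv: "rrh_invariant N E" and "2 \<le> N" "0 \<le> r" "r \<le> 1"
  shows "measure_pmf.expectation (rrh_step r N E) (\<lambda>E'. real (Ncount (Suc N) 1 E'))
       = 1 + (1 - (1 - r) / N) * real (Ncount N 1 E)"
proof -
  let ?c = "real (Ncount N 1 E)"
  let ?leaf = "\<lambda>v. if degree E v = 1 then 1 else 0 :: real"
  have "finite E" "card E = N"
    using rrh_invariant_finite[OF inv] rrh_invariant_card[OF inv] .
  then have "E \<noteq> {}"
    using \<open>2 \<le> N\<close> by auto
  have "(\<Sum>e\<in>E. ?leaf (Max e)) = (\<Sum>v\<in>{1..N}. ?leaf v)"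
    using inv unfolding rrh_invariant_def by (intro sum.reindex_bij_betw) auto
  also have "\<dots> = ?c"
    by (simp add: Ncount_def sum.If_cases Int_def)
  finally have leaves: "(\<Sum>e\<in>E. ?leaf (Max e)) = ?c" .
  have inner: "measure_pmf.expectation (bernoulli_pmf r)
      (\<lambda>b. real (Ncount (Suc N) 1 (insert (rrh_new_edge N e b) E))) = 1 + ?c - (1 - r) * ?leaf (Max e)"
    if "e \<in> E" for e
  proof -
    have redirected: "real (Ncount (Suc N) 1 (insert (rrh_new_edge N e True) E)) = 1 + ?c"
      and extended: "real (Ncount (Suc N) 1 (insert (rrh_new_edge N e False) E))
                     = 1 + ?c - ?leaf (Max e)"
      using Ncount_insert_rrh_new_edge[OF inv \<open>2 \<le> N\<close> that] by simp_all
    show ?thesis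
      unfolding integral_bernoulli_pmf[OF assms(3,4)] redirected extended by (simp add: algebra_simps)
  qed
  have "measure_pmf.expectation (rrh_step r N E) (\<lambda>E'. real (Ncount (Suc N) 1 E'))
      = (\<Sum>e\<in>E. measure_pmf.expectation (bernoulli_pmf r)
            (\<lambda>b. real (Ncount (Suc N) 1 (insert (rrh_new_edge N e b) E))) / real N)"
    unfolding rrh_step_eq_bind_bernoulli
    using \<open>finite E\<close> \<open>E \<noteq> {}\<close> \<open>card E = N\<close>
    by (subst pmf_expectation_bind_pmf_of_set) (auto simp: divide_inverse mult.commute)
  also have "\<dots> = (\<Sum>e\<in>E. (1 + ?c - (1 - r) * ?leaf (Max e)) / real N)"
    using inner by simp
  also have "\<dots> = (real N * (1 + ?c) - (1 - r) * ?c) / real N"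
    using \<open>card E = N\<close> leaves
    by (simp add: sum_divide_distrib[symmetric] sum_subtractf sum_distrib_left[symmetric])
  also have "\<dots> = 1 + (1 - (1 - r) / N) * ?c"
    using \<open>2 \<le> N\<close> by (simp add: field_simps)
  finally show ?thesis .
qed

lemma expectation_Ncount_RRH_Suc:
  assumes "0 \<le> r" "r \<le> 1" "2 \<le> N"
  shows "measure_pmf.expectation (RRH r (Suc N)) (\<lambda>E. real (Ncount (Suc N) 1 E))
       = 1 + (1 - (1 - r) / N) * measure_pmf.expectation (RRH r N) (\<lambda>E. real (Ncount N 1 E))"
proof -
  let ?q = "1 - (1 - r) / N"
  have "integrable (RRH r N) (\<lambda>E. real (Ncount N 1 E))"
    by (rule measure_pmf.integrable_const_bound[where B = "real N"]) (auto simp: Ncount_le)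
  have "measure_pmf.expectation (RRH r (Suc N)) (\<lambda>E. real (Ncount (Suc N) 1 E))
      = measure_pmf.expectation (RRH r N)
          (\<lambda>E. measure_pmf.expectation (rrh_step r N E) (\<lambda>E'. real (Ncount (Suc N) 1 E')))"
    unfolding RRH_Suc[OF order_trans[OF one_le_numeral \<open>2 \<le> N\<close>]]
    by (rule expectation_bind_pmf[where B = "real (Suc N)"])
       (metis Ncount_le abs_of_nonneg of_nat_0_le_iff of_nat_le_iff)
  also have "\<dots> = measure_pmf.expectation (RRH r N) (\<lambda>E. 1 + ?q * real (Ncount N 1 E))"
    using assms rrh_invariant_RRH expectation_Ncount_rrh_step
    by (intro integral_cong_AE AE_pmfI) auto
  also have "\<dots> = 1 + ?q * measure_pmf.expectation (RRH r N) (\<lambda>E. real (Ncount N 1 E))"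
    using \<open>integrable _ _\<close> by simp
  finally show ?thesis .
qed

lemma expectation_Ncount_RRH_2: "measure_pmf.expectation (RRH r 2) (\<lambda>E. real (Ncount 2 1 E)) = 1"
proof -
  have "RRH r 2 = return_pmf (insert {1, Suc 1} {{1}})"
    by (simp add: RRH_def rrh_step_def pmf_of_set_singleton bind_return_pmf numeral_2_eq_2)
  moreover have "Ncount (Suc 1) 1 (insert {1, Suc 1} {{1}}) = 1"
    using Ncount_insert[of 1 "{{1}}" "{1, Suc 1}"] by (simp add: rrh_invariant_def bij_betw_def)
  ultimately show ?thesis
    by (simp add: numeral_2_eq_2)
qed

definition degree_one_mean :: "real \<Rightarrow> nat \<Rightarrow> real" where
  "degree_one_mean r N = real N / (2 - r)
     - (if r = 0 then 0 else 1 / ((2 - r) * Gamma r) * (Gamma (real N - 1 + r) / Gamma (real N)))"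

lemma degree_one_mean_2:
  assumes "0 \<le> r" "r < 2"
  shows "degree_one_mean r 2 = 1"
proof (cases "r = 0")
  case False
  then have "0 < r"
    using assms by simp
  then have "Gamma (real 2 - 1 + r) / Gamma (real 2) = r * Gamma r"
    using Gamma_quotient_plus1[of r 1] by (simp add: add.commute)
  then have "degree_one_mean r 2 = 2 / (2 - r) - 1 / ((2 - r) * Gamma r) * (r * Gamma r)"
    using False by (simp only: degree_one_mean_def of_nat_numeral if_False)
  also have "\<dots> = 2 / (2 - r) - r / (2 - r)"
    using Gamma_real_pos[OF \<open>0 < r\<close>] by simp
  also have "\<dots> = 1"
    using assms by (simp add: diff_divide_distrib[symmetric])
  finally show ?thesis .
qed (simp add: degree_one_mean_def)

lemma degree_one_mean_Suc:
  assumes "0 \<le> r" "r < 2" "1 \<le> N"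
  shows "degree_one_mean r (Suc N) = 1 + (1 - (1 - r) / N) * degree_one_mean r N"
proof (cases "r = 0")
  case False
  define c where "c = 1 / ((2 - r) * Gamma r)"
  define g where "g n = Gamma (real n - 1 + r) / Gamma (real n)" for n
  have mean: "degree_one_mean r n = real n / (2 - r) - c * g n" for n
    using False by (simp add: degree_one_mean_def c_def g_def)
  have "g (Suc N) = Gamma ((real N - 1 + r) + 1) / Gamma (real N + 1)"
    unfolding g_def by (simp add: algebra_simps)
  also have "\<dots> = (real N - 1 + r) / N * g N"
    unfolding g_def using assms False by (intro Gamma_quotient_plus1) auto
  also have "(real N - 1 + r) / N = 1 - (1 - r) / N"
    using assms by (simp add: field_simps)
  finally have g_Suc: "g (Suc N) = (1 - (1 - r) / N) * g N" .
  have linear: "real (Suc N) / (2 - r) = 1 + (1 - (1 - r) / N) * (real N / (2 - r))"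
    using assms by (simp add: field_simps)
  show ?thesis
    unfolding mean g_Suc linear by (simp add: algebra_simps)
qed (use assms in \<open>simp add: degree_one_mean_def field_simps\<close>)

theorem mainTheorem13:
  fixes r :: real and N :: nat
  assumes "0 \<le> r" and "r < 1" and "N \<ge> 2"
  shows "measure_pmf.expectation (RRH r N) (\<lambda>E. real (Ncount N 1 E)) =
         real N / (2 - r)
         - (if r = 0 then 0
            else 1 / ((2 - r) * Gamma r) * (Gamma (real N - 1 + r) / Gamma (real N)))"
proof -
  have "measure_pmf.expectation (RRH r N) (\<lambda>E. real (Ncount N 1 E)) = degree_one_mean r N"
    using \<open>N \<ge> 2\<close>
  proof (induction N rule: dec_induct)
    case base
    show ?case
      using assms expectation_Ncount_RRH_2 degree_one_mean_2 by simp
  next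
    case (step n)
    then show ?case
      using assms expectation_Ncount_RRH_Suc degree_one_mean_Suc by simp
  qed
  then show ?thesis
    by (simp add: degree_one_mean_def)
qed

end
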